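(* For any weighted finite graph $G$ with $N$ vertices and each $1\leq k\leq N$, \[ \overline{h}(k)\geq\frac{1}{2}\bigl(1-h(k)\bigr). \]
   Context: $G=(V,E,w)$ is a finite undirected graph without self-loops, $N=|V|$, positive symmetric edge weights $w_{uv}$ ($w_{uv}=0$ for non-edges), degrees $d_u=\sum_v w_{uv}$ (implicitly positive). $|E(A,B)|:=\sum_{u\in A,v\in B}w_{uv}$, $\mathrm{vol}(A):=\sum_{u\in A}d_u$, $\overline{A}=V\setminus A$. For nonempty $S$, $\phi(S):=|E(S,\overline{S})|/\mathrm{vol}(S)$; $h(k):=\min\max_{1\leq i\leq k}\phi(S_i)$ over all collections of $k$ nonempty pairwise disjoint subsets of $V$. For disjoint $V_1,V_2$ with $V_1\cup V_2\neq\emptyset$, $\overline{\phi}(V_1,V_2):=2|E(V_1,V_2)|/\mathrm{vol}(V_1\cup V_2)$; $\overline{h}(k):=\max\min_{1\leq i\leq k}\overline{\phi}(V_{2i-1},V_{2i})$ over all collections of $k$ pairs $(V_1,V_2),\ldots,(V_{2k-1},V_{2k})$ of pairwise disjoint subsets of $V$ with $V_{2i-1}\cup V_{2i}\neq\emptyset$ for each $i$. *)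

theory Defs
  imports Complex_Main
begin

text \<open>A weighted graph is given by a finite vertex set V and a weight function
  w :: 'a => 'a => real (w u v = 0 for non-edges); all sums range over V.\<close>

definition wgraph :: "'a set \<Rightarrow> ('a \<Rightarrow> 'a \<Rightarrow> real) \<Rightarrow> bool" where
  "wgraph V w \<longleftrightarrow> finite V \<and>
     (\<forall>u\<in>V. \<forall>v\<in>V. w u v = w v u \<and> w u v \<ge> 0) \<and>
     (\<forall>u\<in>V. w u u = 0)"

definition degree :: "'a set \<Rightarrow> ('a \<Rightarrow> 'a \<Rightarrow> real) \<Rightarrow> 'a \<Rightarrow> real" where
  "degree V w u = (\<Sum>v\<in>V. w u v)"

definition cut :: "('a \<Rightarrow> 'a \<Rightarrow> real) \<Rightarrow> 'a set \<Rightarrow> 'a set \<Rightarrow> real" where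
  "cut w A B = (\<Sum>u\<in>A. \<Sum>v\<in>B. w u v)"

definition vol :: "'a set \<Rightarrow> ('a \<Rightarrow> 'a \<Rightarrow> real) \<Rightarrow> 'a set \<Rightarrow> real" where
  "vol V w A = (\<Sum>u\<in>A. degree V w u)"

definition expansion :: "'a set \<Rightarrow> ('a \<Rightarrow> 'a \<Rightarrow> real) \<Rightarrow> 'a set \<Rightarrow> real" where
  "expansion V w S = cut w S (V - S) / vol V w S"

definition bipartiteness :: "'a set \<Rightarrow> ('a \<Rightarrow> 'a \<Rightarrow> real) \<Rightarrow> 'a set \<Rightarrow> 'a set \<Rightarrow> real" where
  "bipartiteness V w A B = 2 * cut w A B / vol V w (A \<union> B)"

definition disjoint_families :: "'a set \<Rightarrow> nat \<Rightarrow> (nat \<Rightarrow> 'a set) set" where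
  "disjoint_families V k = {S. (\<forall>i<k. S i \<subseteq> V \<and> S i \<noteq> {}) \<and>
       (\<forall>i<k. \<forall>j<k. i \<noteq> j \<longrightarrow> S i \<inter> S j = {})}"

definition h_order :: "'a set \<Rightarrow> ('a \<Rightarrow> 'a \<Rightarrow> real) \<Rightarrow> nat \<Rightarrow> real" where
  "h_order V w k = Min {Max {expansion V w (S i) | i. i < k} | S. S \<in> disjoint_families V k}"

definition disjoint_pair_families :: "'a set \<Rightarrow> nat \<Rightarrow> ((nat \<Rightarrow> 'a set) \<times> (nat \<Rightarrow> 'a set)) set" where
  "disjoint_pair_families V k = {(A, B). (\<forall>i<k. A i \<subseteq> V \<and> B i \<subseteq> V \<and> A i \<union> B i \<noteq> {}) \<and>
       (\<forall>i<k. \<forall>j<k. A i \<inter> B j = {}) \<and>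
       (\<forall>i<k. \<forall>j<k. i \<noteq> j \<longrightarrow> A i \<inter> A j = {} \<and> B i \<inter> B j = {})}"

definition hbar_order :: "'a set \<Rightarrow> ('a \<Rightarrow> 'a \<Rightarrow> real) \<Rightarrow> nat \<Rightarrow> real" where
  "hbar_order V w k = Max {Min {bipartiteness V w (A i) (B i) | i. i < k} | A B.
       (A, B) \<in> disjoint_pair_families V k}"

end

theory Submission
  imports Defs "HOL-Library.FuncSet"
begin

text \<open>Take k disjoint sets S_i realising h(k). The edge weight inside S_i is
  vol(S_i)(1 - \<phi>(S_i)), and a greedy bipartition of S_i (each new vertex joins the side
  it has less weight to) cuts at least half of it. The resulting k pairs therefore all
  have bipartiteness at least (1 - \<phi>(S_i))/2 \<ge> (1 - h(k))/2.\<close>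

lemma cut_insert_left:
  "x \<notin> A \<Longrightarrow> finite A \<Longrightarrow> cut w (insert x A) B = (\<Sum>v\<in>B. w x v) + cut w A B"
  unfolding cut_def by simp

lemma cut_insert_right:
  assumes "x \<notin> B" "finite B"
  shows "cut w A (insert x B) = cut w A B + (\<Sum>u\<in>A. w u x)"
  unfolding cut_def using assms by (simp add: sum.distrib add.commute)

text \<open>Note that cut w S S counts every edge inside S twice, so the factor 4 means that
  at least half of the internal edge weight is cut.\<close>

lemma exists_bipartition_cutting_half:
  fixes w :: "'a \<Rightarrow> 'a \<Rightarrow> real"
  assumes "finite S" "\<forall>u\<in>S. \<forall>v\<in>S. w u v = w v u" "\<forall>u\<in>S. w u u = 0"
  shows "\<exists>A\<subseteq>S. cut w S S \<le> 4 * cut w A (S - A)"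
  using assms
proof (induction S rule: finite_induct)
  case empty
  then show ?case by (simp add: cut_def)
next
  case (insert x S)
  then obtain A where A: "A \<subseteq> S" "cut w S S \<le> 4 * cut w A (S - A)"
    by blast
  have sym: "w v x = w x v" if "v \<in> S" for v
    using insert.prems(1) that by blast
  have finA: "finite A" and finB: "finite (S - A)" and "x \<notin> A"
    using A insert.hyps finite_subset by auto
  define a where "a = (\<Sum>u\<in>A. w u x)"
  define b where "b = (\<Sum>v\<in>S - A. w x v)"
  have "(\<Sum>v\<in>S. w x v) = (\<Sum>v\<in>A. w x v) + b"
    unfolding b_def using sum.subset_diff[OF A(1) insert.hyps(1), of "w x"] by simp
  also have "(\<Sum>v\<in>A. w x v) = a"
    unfolding a_def using A(1) sym by (intro sum.cong) auto
  finally have edges_at_x: "(\<Sum>v\<in>S. w x v) = a + b" .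
  have "cut w (insert x S) (insert x S) = (\<Sum>v\<in>S. w x v) + cut w S S + (\<Sum>u\<in>S. w u x)"
    using insert.hyps insert.prems(2)
    by (simp add: cut_insert_left cut_insert_right)
  also have "(\<Sum>u\<in>S. w u x) = (\<Sum>v\<in>S. w x v)"
    using sym by (intro sum.cong) auto
  finally have cut_whole: "cut w (insert x S) (insert x S) = cut w S S + 2 * (a + b)"
    using edges_at_x by simp
  show ?case
  proof (cases "a \<ge> b")
    case True
    have "insert x S - A = insert x (S - A)"
      using \<open>x \<notin> A\<close> by auto
    then have "cut w A (insert x S - A) = cut w A (S - A) + a"
      unfolding a_def using finB insert.hyps by (simp add: cut_insert_right)
    then show ?thesis
      using A cut_whole True by (intro exI[of _ A]) auto
  next
    case False
    have "insert x S - insert x A = S - A"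
      using A insert.hyps by auto
    then have "cut w (insert x A) (insert x S - insert x A) = cut w A (S - A) + b"
      unfolding b_def using finA \<open>x \<notin> A\<close> by (simp add: cut_insert_left)
    then show ?thesis
      using A cut_whole False by (intro exI[of _ "insert x A"]) auto
  qed
qed

lemma vol_eq_cut_inside_plus_cut_outside:
  assumes "finite V" "S \<subseteq> V"
  shows "vol V w S = cut w S S + cut w S (V - S)"
proof -
  have "vol V w S = (\<Sum>u\<in>S. (\<Sum>v\<in>S. w u v) + (\<Sum>v\<in>V - S. w u v))"
    unfolding vol_def degree_def using assms
    by (intro sum.cong) (auto simp: sum.subset_diff[of S V])
  then show ?thesis
    unfolding cut_def by (simp add: sum.distrib)
qed

lemma expansion_le_bipartiteness_of_half_cut:
  assumes "finite V" "S \<subseteq> V" "S \<noteq> {}" "\<forall>u\<in>S. degree V w u > 0"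
    and "A \<subseteq> S" "cut w S S \<le> 4 * cut w A (S - A)"
  shows "(1 - expansion V w S) / 2 \<le> bipartiteness V w A (S - A)"
proof -
  have "finite S"
    using assms(1,2) finite_subset by auto
  then have vol_pos: "vol V w S > 0"
    unfolding vol_def using assms(3,4) by (intro sum_pos) auto
  have "(1 - expansion V w S) / 2 = cut w S S / (2 * vol V w S)"
    unfolding expansion_def vol_eq_cut_inside_plus_cut_outside[OF assms(1,2)]
    using vol_pos vol_eq_cut_inside_plus_cut_outside[OF assms(1,2)]
    by (simp add: field_simps)
  also have "\<dots> \<le> 2 * cut w A (S - A) / vol V w S"
    using assms(6) vol_pos by (simp add: field_simps)
  also have "\<dots> = bipartiteness V w A (S - A)"
    unfolding bipartiteness_def using assms(5) by (simp add: Un_absorb1)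
  finally show ?thesis .
qed

lemma exists_split_with_bipartiteness_ge:
  assumes "wgraph V w" "\<forall>u\<in>V. degree V w u > 0" "S \<subseteq> V" "S \<noteq> {}"
  shows "\<exists>A\<subseteq>S. (1 - expansion V w S) / 2 \<le> bipartiteness V w A (S - A)"
proof -
  have "finite V"
    using assms(1) unfolding wgraph_def by blast
  have "\<exists>A\<subseteq>S. cut w S S \<le> 4 * cut w A (S - A)"
  proof (rule exists_bipartition_cutting_half)
    show "finite S"
      using \<open>finite V\<close> assms(3) finite_subset by blast
    show "\<forall>u\<in>S. \<forall>v\<in>S. w u v = w v u" "\<forall>u\<in>S. w u u = 0"
      using assms(1,3) unfolding wgraph_def by blast+
  qed
  moreover have "\<forall>u\<in>S. degree V w u > 0"
    using assms(2,3) by blast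
  ultimately show ?thesis
    using expansion_le_bipartiteness_of_half_cut[OF \<open>finite V\<close> assms(3,4)] by blast
qed

lemma finite_image_of_restriction_invariant:
  fixes g :: "(nat \<Rightarrow> 'b) \<Rightarrow> 'c"
  assumes "finite T" "\<And>S. S \<in> F \<Longrightarrow> \<forall>i<k. S i \<in> T"
    and "\<And>S S'. \<forall>i<k. S i = S' i \<Longrightarrow> g S = g S'"
  shows "finite (g ` F)"
proof (rule finite_subset)
  show "g ` F \<subseteq> g ` PiE {..<k} (\<lambda>_. T)"
  proof
    fix y assume "y \<in> g ` F"
    then obtain S where "S \<in> F" "y = g S"
      by blast
    then have "restrict S {..<k} \<in> PiE {..<k} (\<lambda>_. T)" "y = g (restrict S {..<k})"
      using assms(2,3) by auto
    then show "y \<in> g ` PiE {..<k} (\<lambda>_. T)"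
      by blast
  qed
  show "finite (g ` PiE {..<k} (\<lambda>_. T))"
    using assms(1) by (intro finite_imageI finite_PiE) auto
qed

lemma disjoint_families_nonempty:
  assumes "finite V" "k \<le> card V"
  shows "disjoint_families V k \<noteq> {}"
proof -
  obtain f where f: "bij_betw f {0..<card V} V"
    using ex_bij_betw_nat_finite[OF assms(1)] by blast
  have "(\<lambda>i. {f i}) \<in> disjoint_families V k"
    using f assms(2) bij_betw_apply[OF f] unfolding bij_betw_def inj_on_def disjoint_families_def
    by auto
  then show ?thesis
    by blast
qed

lemma h_order_attained:
  assumes "finite V" "k \<le> card V"
  obtains S where "S \<in> disjoint_families V k"
    and "\<And>i. i < k \<Longrightarrow> expansion V w (S i) \<le> h_order V w k"
proof -
  define g where "g S = Max {expansion V w (S i) | i. i < k}" for S :: "nat \<Rightarrow> 'a set"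
  have h_eq: "h_order V w k = Min (g ` disjoint_families V k)"
    unfolding h_order_def g_def by (rule arg_cong[where f = Min]) auto
  have g_local: "g S = g S'" if "\<forall>i<k. S i = S' i" for S S'
    unfolding g_def using that by (intro arg_cong[where f = Max] Collect_cong) (auto; metis)
  have "finite (g ` disjoint_families V k)"
    by (rule finite_image_of_restriction_invariant[where T = "Pow V", OF _ _ g_local])
      (use assms(1) in \<open>auto simp: disjoint_families_def\<close>)
  then obtain S where S: "S \<in> disjoint_families V k" "h_order V w k = g S"
    using Min_in disjoint_families_nonempty[OF assms] unfolding h_eq by blast
  show ?thesis
  proof (rule that[OF S(1)])
    fix i assume "i < k"
    then show "expansion V w (S i) \<le> h_order V w k"
      unfolding S(2) g_def by (intro Max_ge) auto
  qed
qed

lemma hbar_order_ge: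
  assumes "finite V" "(A, B) \<in> disjoint_pair_families V k"
  shows "Min {bipartiteness V w (A i) (B i) | i. i < k} \<le> hbar_order V w k"
proof -
  define g where "g P = Min {bipartiteness V w (fst (P i)) (snd (P i)) | i. i < k}"
    for P :: "nat \<Rightarrow> 'a set \<times> 'a set"
  define pairs :: "(nat \<Rightarrow> 'a set) \<times> (nat \<Rightarrow> 'a set) \<Rightarrow> nat \<Rightarrow> 'a set \<times> 'a set"
    where "pairs = (\<lambda>(A, B) i. (A i, B i))"
  have "g (pairs (A', B')) = Min {bipartiteness V w (A' i) (B' i) | i. i < k}" for A' B'
    unfolding g_def pairs_def by simp
  then have values_eq: "{Min {bipartiteness V w (A i) (B i) | i. i < k} | A B.
      (A, B) \<in> disjoint_pair_families V k} = g ` pairs ` disjoint_pair_families V k"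
    unfolding image_image by (auto 0 3 intro: rev_image_eqI)
  have g_local: "g P = g P'" if "\<forall>i<k. P i = P' i" for P P'
    unfolding g_def using that by (intro arg_cong[where f = Min] Collect_cong) (auto; metis)
  have "finite (g ` pairs ` disjoint_pair_families V k)"
    by (rule finite_image_of_restriction_invariant[where T = "Pow V \<times> Pow V", OF _ _ g_local])
      (use assms(1) in \<open>auto simp: disjoint_pair_families_def pairs_def\<close>)
  moreover have "Min {bipartiteness V w (A i) (B i) | i. i < k} \<in> g ` pairs ` disjoint_pair_families V k"
    using assms(2) unfolding values_eq[symmetric] by blast
  ultimately show ?thesis
    unfolding hbar_order_def values_eq by simp
qed

lemma disjoint_pair_family_of_splits:
  assumes "S \<in> disjoint_families V k" "\<And>i. i < k \<Longrightarrow> A i \<subseteq> S i"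
  shows "(A, \<lambda>i. S i - A i) \<in> disjoint_pair_families V k"
  using assms unfolding disjoint_families_def disjoint_pair_families_def by blast

theorem proposition3p5:
  fixes V :: "'a set" and w :: "'a \<Rightarrow> 'a \<Rightarrow> real" and k :: nat
  assumes "wgraph V w"
    and "\<forall>u\<in>V. degree V w u > 0"
    and "1 \<le> k" and "k \<le> card V"
  shows "hbar_order V w k \<ge> (1 - h_order V w k) / 2"
proof -
  have finV: "finite V"
    using assms(1) unfolding wgraph_def by blast
  obtain S where S: "S \<in> disjoint_families V k"
    and S_exp: "\<And>i. i < k \<Longrightarrow> expansion V w (S i) \<le> h_order V w k"
    using h_order_attained[OF finV assms(4)] by blast
  have "\<exists>A\<subseteq>S i. (1 - expansion V w (S i)) / 2 \<le> bipartiteness V w A (S i - A)"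
    if "i < k" for i
    using S that unfolding disjoint_families_def
    by (intro exists_split_with_bipartiteness_ge[OF assms(1,2)]) auto
  then obtain A where A_sub: "\<And>i. i < k \<Longrightarrow> A i \<subseteq> S i"
    and A_bip: "\<And>i. i < k \<Longrightarrow>
      (1 - expansion V w (S i)) / 2 \<le> bipartiteness V w (A i) (S i - A i)"
    by metis
  have "(1 - h_order V w k) / 2 \<le> bipartiteness V w (A i) (S i - A i)" if "i < k" for i
    using S_exp[OF that] A_bip[OF that] by (smt (verit) divide_right_mono)
  then have "(1 - h_order V w k) / 2 \<le> Min {bipartiteness V w (A i) (S i - A i) | i. i < k}"
    using assms(3) by (intro Min.boundedI) (auto intro: exI[of _ 0])
  also have "\<dots> \<le> hbar_order V w k"
    by (rule hbar_order_ge[OF finV disjoint_pair_family_of_splits[OF S A_sub]])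
  finally show ?thesis .
qed

end
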